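(* Let $b\ge1$ and identify each $f\in\mathcal{M}^b$ with the base-$(b+1)$ number $\beta(f)=\sum_{i\ge0}f(i)(b+1)^i$. Then $\beta$ is a monoid homomorphism from $\mathcal{M}^b$ with multiset addition to base-$(b+1)$ numbers with lunar multiplication: $\beta(f+g)=\beta(f)\otimes\beta(g)$ for all $f,g\in\mathcal{M}^b$, and the neutral multiset (the element $0$ with multiplicity $b$) is mapped to the digit $b$, the neutral element of lunar multiplication.
   Context: $\mathcal{M}^b$ is the set of functions $f:\mathbb{N}\to\{0,\ldots,b\}$ with finite support (finite multisets with multiplicities at most $b$). The set-array representation of $f$ is $(A_1,\ldots,A_b)$ with $A_i=\{a:f(a)\ge i\}$, and multiset addition is coordinatewise: $(A_1,\ldots,A_b)+(B_1,\ldots,B_b)=(A_1+B_1,\ldots,A_b+B_b)$, where $S+T=\{s+t:s\in S,t\in T\}$ and $S+\emptyset=\emptyset$. Base-$(b+1)$ lunar product: for $x=\sum_ix_i(b+1)^i$, $y=\sum_jy_j(b+1)^j$ with digits in $\{0,\ldots,b\}$, $x\otimes y=\sum_n(\max_{i+j=n}\min(x_i,y_j))(b+1)^n$. *)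

theory Defs
  imports Main
begin

definition Mb :: "nat \<Rightarrow> (nat \<Rightarrow> nat) set" where
  "Mb b = {f. finite {a. f a \<noteq> 0} \<and> (\<forall>a. f a \<le> b)}"

definition sumset :: "nat set \<Rightarrow> nat set \<Rightarrow> nat set" where
  "sumset S T = {s + t | s t. s \<in> S \<and> t \<in> T}"

definition set_array :: "(nat \<Rightarrow> nat) \<Rightarrow> nat \<Rightarrow> nat set" where
  "set_array f i = {a. f a \<ge> i}"

definition from_array :: "nat \<Rightarrow> (nat \<Rightarrow> nat set) \<Rightarrow> nat \<Rightarrow> nat" where
  "from_array b A a = card {i \<in> {1..b}. a \<in> A i}"

definition madd :: "nat \<Rightarrow> (nat \<Rightarrow> nat) \<Rightarrow> (nat \<Rightarrow> nat) \<Rightarrow> nat \<Rightarrow> nat" where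
  "madd b f g = from_array b (\<lambda>i. sumset (set_array f i) (set_array g i))"

definition digit :: "nat \<Rightarrow> nat \<Rightarrow> nat \<Rightarrow> nat" where
  "digit b x i = x div (b + 1) ^ i mod (b + 1)"

text \<open>Base-(b+1) lunar product; digits with index beyond x+y are all zero.\<close>
definition lunar_mult :: "nat \<Rightarrow> nat \<Rightarrow> nat \<Rightarrow> nat" where
  "lunar_mult b x y =
     (\<Sum>n\<le>x + y. Max {min (digit b x i) (digit b y (n - i)) | i. i \<le> n} * (b + 1) ^ n)"

definition beta :: "nat \<Rightarrow> (nat \<Rightarrow> nat) \<Rightarrow> nat" where
  "beta b f = (\<Sum>i\<in>{i. f i \<noteq> 0}. f i * (b + 1) ^ i)"

definition neutral_ms :: "nat \<Rightarrow> nat \<Rightarrow> nat" where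
  "neutral_ms b = (\<lambda>a. if a = 0 then b else 0)"

end

theory Submission
  imports Defs
begin

text \<open>Multiset addition and lunar multiplication are the same max-min convolution, on
  multiplicity functions and on digit sequences respectively: a sum \<open>s + t = n\<close> lies in the
  \<open>i\<close>-th sumset exactly when \<open>i \<le> min (f s) (g t)\<close>, so the multiplicity of \<open>n\<close> in \<open>f + g\<close>
  is the maximum of these minima. Since \<open>\<beta>\<close> is a bijection between multiplicity functions
  bounded by \<open>b\<close> and base-\<open>(b+1)\<close> digit sequences, it intertwines the two operations.\<close>

definition lunar_conv :: "(nat \<Rightarrow> nat) \<Rightarrow> (nat \<Rightarrow> nat) \<Rightarrow> nat \<Rightarrow> nat" where
  "lunar_conv f g n = Max {min (f i) (g (n - i)) | i. i \<le> n}"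

lemma lunar_mult_eq_lunar_conv:
  "lunar_mult b x y = (\<Sum>n\<le>x + y. lunar_conv (digit b x) (digit b y) n * (b + 1) ^ n)"
  unfolding lunar_mult_def lunar_conv_def ..

lemma le_lunar_conv_iff: "k \<le> lunar_conv f g n \<longleftrightarrow> (\<exists>i\<le>n. k \<le> f i \<and> k \<le> g (n - i))"
proof -
  have "k \<le> lunar_conv f g n \<longleftrightarrow> (\<exists>x\<in>{min (f i) (g (n - i)) | i. i \<le> n}. k \<le> x)"
    unfolding lunar_conv_def by (rule Max_ge_iff) auto
  then show ?thesis by auto
qed

lemma lunar_conv_le:
  assumes "\<And>a. f a \<le> b"
  shows "lunar_conv f g n \<le> b"
  using le_lunar_conv_iff[of "lunar_conv f g n" f g n] assms le_trans by blast

lemma sumset_set_array: "sumset (set_array f k) (set_array g k) = set_array (lunar_conv f g) k"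
proof (intro set_eqI iffI)
  fix n assume "n \<in> sumset (set_array f k) (set_array g k)"
  then obtain s t where "n = s + t" "k \<le> f s" "k \<le> g t"
    unfolding sumset_def set_array_def by blast
  then show "n \<in> set_array (lunar_conv f g) k"
    unfolding set_array_def le_lunar_conv_iff by (intro CollectI exI[of _ s]) simp
next
  fix n assume "n \<in> set_array (lunar_conv f g) k"
  then obtain s where "s \<le> n" "k \<le> f s" "k \<le> g (n - s)"
    unfolding set_array_def le_lunar_conv_iff by blast
  then show "n \<in> sumset (set_array f k) (set_array g k)"
    unfolding sumset_def set_array_def by (intro CollectI exI[of _ s] exI[of _ "n - s"]) simp
qed

lemma from_array_set_array:
  assumes "\<And>a. h a \<le> b"
  shows "from_array b (set_array h) = h"
proof
  fix a
  have "{i \<in> {1..b}. a \<in> set_array h i} = {1..h a}"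
    using assms[of a] unfolding set_array_def by auto
  then show "from_array b (set_array h) a = h a"
    unfolding from_array_def by simp
qed

lemma madd_eq_lunar_conv:
  assumes "f \<in> Mb b"
  shows "madd b f g = lunar_conv f g"
proof -
  have "\<And>a. lunar_conv f g a \<le> b"
    by (rule lunar_conv_le) (use assms in \<open>simp add: Mb_def\<close>)
  then show ?thesis
    unfolding madd_def sumset_set_array by (rule from_array_set_array)
qed

lemma lunar_conv_support:
  assumes "lunar_conv f g n \<noteq> 0"
  obtains i where "i \<le> n" "f i \<noteq> 0" "g (n - i) \<noteq> 0"
  using assms le_lunar_conv_iff[of 1 f g n] that by auto

lemma digit_add_mult_0:
  assumes "a \<le> b"
  shows "digit b (a + (b + 1) * r) 0 = a"
  using assms unfolding digit_def power_0 div_by_1 mod_mult_self2 by simp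

lemma digit_add_mult_Suc:
  assumes "a \<le> b"
  shows "digit b (a + (b + 1) * r) (Suc k) = digit b r k"
proof -
  have "(a + (b + 1) * r) div (b + 1) = r + a div (b + 1)"
    by (rule div_mult_self2) simp
  also have "\<dots> = r"
    using assms by simp
  finally show ?thesis
    unfolding digit_def power_Suc div_mult2_eq by simp
qed

lemma digit_sum_powers:
  assumes "\<And>i. f i \<le> b"
  shows "digit b (\<Sum>i<N. f i * (b + 1) ^ i) k = (if k < N then f k else 0)"
  using assms
proof (induction N arbitrary: f k)
  case 0
  then show ?case by (simp add: digit_def)
next
  case (Suc N)
  define r where "r = (\<Sum>i<N. f (Suc i) * (b + 1) ^ i)"
  have sum: "(\<Sum>i<Suc N. f i * (b + 1) ^ i) = f 0 + (b + 1) * r"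
    unfolding r_def sum.lessThan_Suc_shift by (simp add: sum_distrib_left algebra_simps)
  show ?case
  proof (cases k)
    case 0
    then show ?thesis unfolding \<open>k = 0\<close> sum digit_add_mult_0[OF Suc.prems] by simp
  next
    case (Suc k')
    then show ?thesis
      unfolding \<open>k = Suc k'\<close> sum digit_add_mult_Suc[OF Suc.prems] r_def
      using Suc.IH[of "\<lambda>i. f (Suc i)"] Suc.prems by simp
  qed
qed

lemma beta_eq_sum_lessThan:
  assumes "finite {a. f a \<noteq> 0}" "{a. f a \<noteq> 0} \<subseteq> {..<N}"
  shows "beta b f = (\<Sum>i<N. f i * (b + 1) ^ i)"
  unfolding beta_def by (rule sum.mono_neutral_left) (use assms in auto)

lemma digit_beta:
  assumes "f \<in> Mb b"
  shows "digit b (beta b f) = f"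
proof
  fix k
  have fin: "finite {a. f a \<noteq> 0}" and le: "\<And>a. f a \<le> b"
    using assms by (auto simp: Mb_def)
  obtain N where N: "{a. f a \<noteq> 0} \<union> {k} \<subseteq> {..<N}"
    using fin finite_nat_set_iff_bounded[of "{a. f a \<noteq> 0} \<union> {k}"] by blast
  then have "beta b f = (\<Sum>i<N. f i * (b + 1) ^ i)"
    using beta_eq_sum_lessThan[OF fin] by blast
  then show "digit b (beta b f) k = f k" using digit_sum_powers[of f b N k] le N by simp
qed

lemma le_beta_if_nonzero:
  assumes "f \<in> Mb b" "f s \<noteq> 0"
  shows "s \<le> beta b f"
proof -
  have "f s \<le> b" using assms(1) by (simp add: Mb_def)
  then have "(2::nat) ^ s \<le> (b + 1) ^ s" using assms(2) by (intro power_mono) auto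
  then have "s < (b + 1) ^ s" using less_exp[of s] by linarith
  also have "\<dots> \<le> f s * (b + 1) ^ s" using assms(2) by simp
  also have "\<dots> \<le> beta b f" unfolding beta_def
    by (rule member_le_sum) (use assms in \<open>auto simp: Mb_def\<close>)
  finally show ?thesis by simp
qed

lemma beta_lunar_conv:
  assumes f: "f \<in> Mb b" and g: "g \<in> Mb b"
  shows "beta b (lunar_conv f g) = lunar_mult b (beta b f) (beta b g)"
proof -
  let ?N = "Suc (beta b f + beta b g)"
  have support: "{n. lunar_conv f g n \<noteq> 0} \<subseteq> {..<?N}"
  proof
    fix n assume "n \<in> {n. lunar_conv f g n \<noteq> 0}"
    then obtain i where "i \<le> n" "f i \<noteq> 0" "g (n - i) \<noteq> 0"
      using lunar_conv_support by blast
    then show "n \<in> {..<?N}"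
      using le_beta_if_nonzero[OF f] le_beta_if_nonzero[OF g] by fastforce
  qed
  have "beta b (lunar_conv f g) = (\<Sum>n<?N. lunar_conv f g n * (b + 1) ^ n)"
    using beta_eq_sum_lessThan[OF finite_subset[OF support] support] by simp
  then show ?thesis
    unfolding lunar_mult_eq_lunar_conv lessThan_Suc_atMost digit_beta[OF f] digit_beta[OF g]
    by simp
qed

lemma beta_neutral_ms: "beta b (neutral_ms b) = b"
proof (cases "b = 0")
  case False
  then have "{i. neutral_ms b i \<noteq> 0} = {0}" by (auto simp: neutral_ms_def)
  then show ?thesis unfolding beta_def by (simp add: neutral_ms_def)
qed (simp add: beta_def neutral_ms_def)

theorem mainTheorem11:
  fixes b :: nat
  assumes "b \<ge> 1"
  shows "(\<forall>f \<in> Mb b. \<forall>g \<in> Mb b. beta b (madd b f g) = lunar_mult b (beta b f) (beta b g))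
         \<and> beta b (neutral_ms b) = b"
  using madd_eq_lunar_conv beta_lunar_conv beta_neutral_ms by metis

end
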